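(* In the setting of the context, the image of the homomorphism $l\colon\mathrm{Aut}(X,c_1(L))\to\mathrm{GL}(g,\mathbb{Z})$ lies in $\mathrm{GL}(g,\mathbb{Z})\cap\mathrm{O}(g,B^{-1})$, where $\mathrm{O}(g,B^{-1}):=\{M\in\mathrm{GL}_g(\mathbb{R}) : {}^tMB^{-1}M=B^{-1}\}$.
   Context: $\Delta$ unit disc, $\Delta^*$ punctured disc, $\mathbb{C}((t))^{\mathrm{mero}}$ the field of germs at $0$ of meromorphic functions with poles only at $0$, $\mathrm{val}_t$ its $t$-adic valuation. Let $\mathcal{X}^*=\big((\mathbb{C}^* )^g\times\Delta^*\big)/\mathbb{Z}^g\to\Delta^*$ be a maximally degenerating family of polarized abelian varieties with polarization type $E=\mathrm{diag}(e_1,\dots,e_g)$, $m\in\mathbb{Z}^g$ acting by $Z_i\mapsto Z_i\prod_jp_{i,j}(t)^{m_j}$, $p_{i,j}=q_{i,j}^{e_i}$, $q_{i,j}\in\mathbb{C}((t))^{\mathrm{mero}}$ symmetric in $i,j$; the fibres are $\mathcal{X}_t=\mathbb{C}^g/(E\mathbb{Z}^g\oplus\Omega(t)\mathbb{Z}^g)$ with $\Omega(t)=(\frac{1}{2\pi\sqrt{-1}}\log q_{i,j}(t))$. Let $B=(\mathrm{val}_t q_{i,j}(t))_{i,j}$ (a positive definite symmetric integer matrix). $(X,L)$ is the associated polarized abelian variety over $\mathbb{C}((t))^{\mathrm{mero}}$, and $\mathrm{Aut}(X,c_1(L))$ is the group of automorphisms of $X$ preserving $c_1(L)$ (equivalently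 preserving the flat Kähler metric with class $c_1(\mathcal{L}_t)$ on each $\mathcal{X}_t$; each such automorphism extends to an automorphism of $\mathcal{X}^*$, after shrinking $\Delta$). For $f\in\mathrm{Aut}(X,c_1(L))$, $l(f)\in\mathrm{GL}(g,\mathbb{Z})$ is the restriction of $f_*$ on $H_1(\mathcal{X}_t,\mathbb{Z})=E\mathbb{Z}^g\oplus\Omega(t)\mathbb{Z}^g$ to the summand $E\mathbb{Z}^g\cong\mathbb{Z}^g$ (which it preserves); $l$ is a group homomorphism. *)

theory Defs
  imports "HOL-Complex_Analysis.Complex_Analysis"
begin

text \<open>Index type 'n of cardinality g.  Vectors in C^g are complex^'n, matrices complex^'n^'n.\<close>

text \<open>Germ at 0 of a meromorphic function with poles only at 0, not identically zero
  (so that its t-adic valuation, here zorder at 0, is a finite integer).\<close>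
definition mero_germ :: "(complex \<Rightarrow> complex) \<Rightarrow> bool" where
  "mero_germ f \<longleftrightarrow> (\<exists>r>0. f holomorphic_on (ball 0 r - {0})) \<and> not_essential f 0
      \<and> (\<exists>\<^sub>F z in at 0. f z \<noteq> 0)"

definition valt :: "(complex \<Rightarrow> complex) \<Rightarrow> int" where
  "valt f = zorder f 0"

definition Bmat :: "('n \<Rightarrow> 'n \<Rightarrow> complex \<Rightarrow> complex) \<Rightarrow> real^'n^'n" where
  "Bmat q = (\<chi> i j. real_of_int (valt (q i j)))"

definition posdef :: "real^'n^'n \<Rightarrow> bool" where
  "posdef M \<longleftrightarrow> transpose M = M \<and> (\<forall>x. x \<noteq> 0 \<longrightarrow> x \<bullet> (M *v x) > 0)"

definition Emat :: "('n \<Rightarrow> nat) \<Rightarrow> complex^'n^'n" where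
  "Emat e = (\<chi> i j. if i = j then of_nat (e i) else 0)"

definition intvecs :: "(complex^'n) set" where
  "intvecs = {v. \<forall>i. v $ i \<in> \<int>}"

definition Lat :: "('n \<Rightarrow> nat) \<Rightarrow> complex^'n^'n \<Rightarrow> (complex^'n) set" where
  "Lat e Om = {Emat e *v m + Om *v n | m n. m \<in> intvecs \<and> n \<in> intvecs}"

definition ImM :: "complex^'n^'n \<Rightarrow> real^'n^'n" where
  "ImM M = (\<chi> i j. Im (M $ i $ j))"

definition cmat :: "real^'n^'n \<Rightarrow> complex^'n^'n" where
  "cmat M = (\<chi> i j. complex_of_real (M $ i $ j))"

definition cnjM :: "complex^'n^'n \<Rightarrow> complex^'n^'n" where
  "cnjM M = (\<chi> i j. cnj (M $ i $ j))"

text \<open>Universal cover of a punctured disc: s with Im s > R, t = exp(2 pi i s).\<close>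
definition Ucov :: "real \<Rightarrow> complex set" where
  "Ucov R = {s. Im s > R}"

text \<open>Standing assumptions on the family: Om s is a holomorphic branch of
  (1/(2 pi i)) log q_ij(t) with t = exp(2 pi i s), symmetric with positive definite
  imaginary part, and the lattice is invariant under s -> s+1 (so the family descends to
  the punctured disc).\<close>
definition family_data :: "('n \<Rightarrow> nat) \<Rightarrow> ('n \<Rightarrow> 'n \<Rightarrow> complex \<Rightarrow> complex)
    \<Rightarrow> (complex \<Rightarrow> complex^'n^'n) \<Rightarrow> real \<Rightarrow> bool" where
  "family_data e q Om R \<longleftrightarrow>
     (\<forall>i j. (\<lambda>s. Om s $ i $ j) holomorphic_on Ucov R) \<and>
     (\<forall>s\<in>Ucov R. \<forall>i j. exp (2 * pi * \<i> * Om s $ i $ j) = q i j (exp (2 * pi * \<i> * s))) \<and>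
     (\<forall>s\<in>Ucov R. transpose (Om s) = Om s \<and> posdef (ImM (Om s))) \<and>
     (\<forall>s\<in>Ucov R. Lat e (Om (s + 1)) = Lat e (Om s))"

text \<open>Automorphism of the family (fixing the origin) preserving the flat Kaehler metric
  H_t(v,w) = v^T (Im Omega)^{-1} conj w of class c_1(L_t) on every fibre
  C^g / (E Z^g + Omega Z^g): a holomorphically varying complex linear map A(s),
  descending to the punctured disc (A(s+1) = A(s)), mapping the lattice onto itself.\<close>
definition aut_c1 :: "('n \<Rightarrow> nat) \<Rightarrow> (complex \<Rightarrow> complex^'n^'n) \<Rightarrow> real
    \<Rightarrow> (complex \<Rightarrow> complex^'n^'n) \<Rightarrow> bool" where
  "aut_c1 e Om R A \<longleftrightarrow>
     (\<forall>i j. (\<lambda>s. A s $ i $ j) holomorphic_on Ucov R) \<and>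
     (\<forall>s\<in>Ucov R. invertible (A s) \<and> A (s + 1) = A s \<and>
        (\<lambda>v. A s *v v) ` Lat e (Om s) = Lat e (Om s) \<and>
        transpose (A s) ** cmat (matrix_inv (ImM (Om s))) ** cnjM (A s)
          = cmat (matrix_inv (ImM (Om s))))"

definition GLZ :: "(real^'n^'n) set" where
  "GLZ = {M. (\<forall>i j. M $ i $ j \<in> \<int>) \<and> (det M = 1 \<or> det M = -1)}"

definition Orth :: "real^'n^'n \<Rightarrow> (real^'n^'n) set" where
  "Orth Q = {M. invertible M \<and> transpose M ** Q ** M = Q}"

text \<open>l(f): the restriction of f_* to the summand E Z^g, i.e. the real matrix L with
  A v = L v for all v in E Z^g (written in the standard coordinates of R^g, the real span
  of E Z^g).\<close>
definition restricts_to :: "('n \<Rightarrow> nat) \<Rightarrow> complex^'n^'n \<Rightarrow> real^'n^'n \<Rightarrow> bool" where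
  "restricts_to e A L \<longleftrightarrow> (\<forall>m\<in>intvecs. A *v (Emat e *v m) = cmat L *v (Emat e *v m))"

end

theory Submission
  imports Defs
begin

(* Write Y = Im Om. The automorphism is a holomorphic family of matrices A(s) mapping the period
   lattice E Z^g + Om Z^g onto itself and preserving the Hermitian form with matrix Y^-1.
   For each k, A(s) E e_k = E a + Om b with integral a, b, where b = Y^-1 Im (A(s) E e_k)
   depends continuously on s and is therefore constant. Since Y(s) = Im s B + O(1) with B
   positive definite, Y^-1 becomes small on the real vector E e_k while b . Y b grows, so
   preservation of the form forces b = 0. Hence A(s) is real with entries in (e_i / e_k) Z,
   so by continuity A(s) is a constant real matrix L = l(f). The form condition reads
   L^T Y^-1 L = Y^-1, i.e. L Y L^T = Y: it gives det L = +-1, integrality of L (via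
   surjectivity on the lattice) and, dividing by Im s and letting Im s tend to infinity,
   L B L^T = B, which is the orthogonality for B^-1. *)

section \<open>Real matrices\<close>

lemma matrix_inv_right:
  "invertible (M::'a::semiring_1^'n^'n) \<Longrightarrow> M ** matrix_inv M = mat 1"
  and matrix_inv_left:
  "invertible (M::'a::semiring_1^'n^'n) \<Longrightarrow> matrix_inv M ** M = mat 1"
  unfolding matrix_inv_def invertible_def by (metis (mono_tags, lifting) someI_ex)+

lemma invertible_matrix_inv:
  fixes M :: "real^'n^'n"
  assumes "invertible M" shows "invertible (matrix_inv M)"
  using assms invertible_def matrix_inv_left matrix_inv_right by blast

lemma matrix_inv_matrix_inv:
  fixes M :: "real^'n^'n"
  assumes "invertible M" shows "matrix_inv (matrix_inv M) = M"
  by (metis assms invertible_def matrix_inv_left matrix_inv_right matrix_mul_assoc matrix_mul_lid matrix_mul_rid)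

lemma congruence_matrix_inv:
  fixes P Q :: "real^'n^'n"
  assumes "invertible Q" and "transpose P ** Q ** P = Q"
  shows "P ** matrix_inv Q ** transpose P = matrix_inv Q"
proof -
  have "matrix_inv Q ** (transpose P ** Q ** P) = mat 1"
    using assms by (simp add: matrix_inv_left)
  then have "(matrix_inv Q ** transpose P ** Q) ** P = mat 1"
    by (simp add: matrix_mul_assoc)
  then have "P ** (matrix_inv Q ** transpose P ** Q) = mat 1"
    by (rule matrix_left_right_inverse[THEN iffD1])
  then have "P ** matrix_inv Q ** transpose P ** (Q ** matrix_inv Q) = matrix_inv Q"
    by (metis matrix_mul_assoc matrix_mul_lid)
  then show ?thesis
    using assms(1) by (simp add: matrix_inv_right)
qed

lemma det_congruence:
  fixes P Q :: "real^'n^'n"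
  assumes "invertible Q" and "transpose P ** Q ** P = Q"
  shows "det P = 1 \<or> det P = -1"
proof -
  have "det P * det P * det Q = 1 * det Q"
    using arg_cong[OF assms(2), of det] by (simp add: det_mul det_transpose)
  moreover have "det Q \<noteq> 0" using assms(1) invertible_det_nz by blast
  ultimately show ?thesis by (simp add: square_eq_1_iff)
qed

lemma posdef_invertible:
  assumes "posdef (M::real^'n^'n)" shows "invertible M"
proof -
  have "x = 0" if "M *v x = 0" for x
    using assms that unfolding posdef_def by (metis inner_zero_right less_irrefl)
  then have "inj ((*v) M)"
    by (metis linear_injective_0 matrix_vector_mul_linear)
  then show ?thesis
    using matrix_left_invertible_injective invertible_left_inverse by blast
qed

lemma posdef_coercive:
  assumes "posdef (M::real^'n^'n)"
  obtains l where "l > 0" "\<And>x. l * (norm x)\<^sup>2 \<le> x \<bullet> (M *v x)"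
proof -
  have cont: "continuous_on (sphere 0 1) (\<lambda>x. x \<bullet> (M *v x))"
    by (intro continuous_intros linear_continuous_on matrix_vector_mul_linear)
  have "sphere (0::real^'n) 1 \<noteq> {}"
    using norm_axis_1 by (metis mem_sphere_0 empty_iff)
  then obtain x0 where x0: "x0 \<in> sphere 0 1"
    and min: "\<And>y. y \<in> sphere 0 1 \<Longrightarrow> x0 \<bullet> (M *v x0) \<le> y \<bullet> (M *v y)"
    using continuous_attains_inf[OF compact_sphere _ cont] by blast
  have "x0 \<bullet> (M *v x0) * (norm x)\<^sup>2 \<le> x \<bullet> (M *v x)" for x :: "real^'n"
  proof (cases "x = 0")
    case False
    define u where "u = (1 / norm x) *\<^sub>R x"
    have "x \<bullet> (M *v x) = (norm x)\<^sup>2 * (u \<bullet> (M *v u))"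
      using False by (simp add: u_def matrix_vector_mult_scaleR power2_eq_square)
    moreover have "x0 \<bullet> (M *v x0) \<le> u \<bullet> (M *v u)"
      using False by (intro min) (simp add: u_def)
    ultimately show ?thesis
      by (metis mult.commute mult_right_mono zero_le_power2)
  qed simp
  moreover have "x0 \<bullet> (M *v x0) > 0"
    using assms x0 unfolding posdef_def by (metis mem_sphere_0 norm_zero zero_neq_one)
  ultimately show ?thesis using that by blast
qed

lemma abs_quadratic_form_le:
  fixes D :: "real^'n^'n"
  assumes "\<And>i j. \<bar>D $ i $ j\<bar> \<le> K"
  shows "\<bar>z \<bullet> (D *v z)\<bar> \<le> (real CARD('n))\<^sup>2 * K * (norm z)\<^sup>2"
proof -
  have "\<bar>z \<bullet> (D *v z)\<bar> \<le> norm z * norm (D *v z)"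
    by (rule Cauchy_Schwarz_ineq2)
  also have "norm (D *v z) \<le> onorm ((*v) D) * norm z"
    by (rule onorm) simp
  also have "onorm ((*v) D) \<le> real CARD('n) * real CARD('n) * K"
    by (rule onorm_le_matrix_component) (rule assms)
  finally show ?thesis
    by (simp add: power2_eq_square mult_left_mono mult_right_mono mult.assoc mult.left_commute)
qed

lemma inverse_quadratic_form_bounds:
  fixes Y :: "real^'n^'n"
  assumes "invertible Y" and "\<mu> > 0" and coercive: "\<And>z. \<mu> * (norm z)\<^sup>2 \<le> z \<bullet> (Y *v z)"
  shows "0 \<le> w \<bullet> (matrix_inv Y *v w)" and "w \<bullet> (matrix_inv Y *v w) \<le> (norm w)\<^sup>2 / \<mu>"
proof -
  define z where "z = matrix_inv Y *v w"
  have "Y *v z = w"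
    using assms(1) by (simp add: z_def matrix_vector_mul_assoc matrix_inv_right)
  then have form: "w \<bullet> (matrix_inv Y *v w) = z \<bullet> (Y *v z)"
    by (simp add: z_def inner_commute)
  have lower: "\<mu> * (norm z)\<^sup>2 \<le> w \<bullet> (matrix_inv Y *v w)"
    using coercive form by simp
  moreover have "0 \<le> \<mu> * (norm z)\<^sup>2"
    using assms(2) by simp
  ultimately show "0 \<le> w \<bullet> (matrix_inv Y *v w)"
    by linarith
  have upper: "w \<bullet> (matrix_inv Y *v w) \<le> norm w * norm z"
    unfolding z_def by (rule order_trans[OF abs_ge_self Cauchy_Schwarz_ineq2])
  have "norm z \<le> norm w / \<mu>"
  proof (cases "z = 0")
    case False
    have "\<mu> * norm z * norm z \<le> norm w * norm z"
      using lower upper by (simp add: power2_eq_square mult.assoc)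
    then have "\<mu> * norm z \<le> norm w"
      using False by simp
    then show ?thesis
      using assms(2) by (simp add: field_simps)
  qed (use assms(2) in auto)
  then have "norm w * norm z \<le> norm w * (norm w / \<mu>)"
    by (rule mult_left_mono) simp
  with upper show "w \<bullet> (matrix_inv Y *v w) \<le> (norm w)\<^sup>2 / \<mu>"
    by (simp add: power2_eq_square)
qed

lemma Ints_vec_norm_less_one:
  fixes b :: "real^'n"
  assumes "\<And>j. b $ j \<in> \<int>" and "norm b < 1"
  shows "b = 0"
proof -
  have "b $ j = 0" for j
  proof (rule ccontr)
    assume "b $ j \<noteq> 0"
    then have "1 \<le> \<bar>b $ j\<bar>"
      using Ints_nonzero_abs_ge1 assms(1) by blast
    with component_le_norm_cart[of b j] assms(2) show False
      by linarith
  qed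
  then show ?thesis
    by (simp add: vec_eq_iff)
qed

section \<open>Complex matrices and Hermitian forms\<close>

lemma cmat_mult: "cmat P ** cmat Q = cmat (P ** Q)"
  by (simp add: cmat_def matrix_matrix_mult_def vec_eq_iff)

lemma cmat_transpose: "transpose (cmat P) = cmat (transpose P)"
  by (simp add: cmat_def transpose_def vec_eq_iff)

lemma cnjM_cmat: "cnjM (cmat P) = cmat P"
  by (simp add: cmat_def cnjM_def vec_eq_iff)

lemma cmat_inject: "cmat P = cmat Q \<longleftrightarrow> P = Q"
  by (simp add: cmat_def vec_eq_iff)

definition Re_vec :: "complex^'n \<Rightarrow> real^'n" where
  "Re_vec v = (\<chi> i. Re (v $ i))"

definition Im_vec :: "complex^'n \<Rightarrow> real^'n" where
  "Im_vec v = (\<chi> i. Im (v $ i))"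

lemma Im_vec_add: "Im_vec (u + w) = Im_vec u + Im_vec w"
  by (simp add: Im_vec_def vec_eq_iff)

lemma Im_vec_cmat: "Im_vec (cmat P *v u) = P *v Im_vec u"
  by (simp add: Im_vec_def cmat_def matrix_vector_mult_def vec_eq_iff Im_sum)

lemma Re_vec_axis: "Re_vec (axis k 1) = axis k 1"
  by (simp add: Re_vec_def axis_def vec_eq_iff)

definition herm_form :: "complex^'n^'n \<Rightarrow> complex^'n \<Rightarrow> complex" where
  "herm_form M u = (\<Sum>i\<in>UNIV. \<Sum>j\<in>UNIV. u $ i * M $ i $ j * cnj (u $ j))"

lemma sum_swap_pairs:
  "(\<Sum>i\<in>A. \<Sum>j\<in>B. \<Sum>k\<in>C. \<Sum>l\<in>D. f i j k l) = (\<Sum>k\<in>C. \<Sum>l\<in>D. \<Sum>i\<in>A. \<Sum>j\<in>B. f i j k l)"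
proof -
  have "(\<Sum>i\<in>A. \<Sum>j\<in>B. \<Sum>k\<in>C. \<Sum>l\<in>D. f i j k l) = (\<Sum>i\<in>A. \<Sum>k\<in>C. \<Sum>l\<in>D. \<Sum>j\<in>B. f i j k l)"
    by (rule sum.cong[OF refl], rule trans[OF sum.swap], rule sum.cong[OF refl], rule sum.swap)
  also have "\<dots> = (\<Sum>k\<in>C. \<Sum>l\<in>D. \<Sum>i\<in>A. \<Sum>j\<in>B. f i j k l)"
    by (rule trans[OF sum.swap], rule sum.cong[OF refl], rule sum.swap)
  finally show ?thesis .
qed

lemma herm_form_congruence:
  fixes A M :: "complex^'n^'n"
  shows "herm_form (transpose A ** M ** cnjM A) u = herm_form M (A *v u)"
proof -
  have "herm_form (transpose A ** M ** cnjM A) u =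
      (\<Sum>i\<in>UNIV. \<Sum>j\<in>UNIV. \<Sum>k\<in>UNIV. \<Sum>l\<in>UNIV. A $ k $ i * u $ i * M $ k $ l * cnj (A $ l $ j * u $ j))"
    unfolding herm_form_def
    by (simp add: matrix_matrix_mult_def transpose_def cnjM_def sum_distrib_left sum_distrib_right
        ac_simps) (rule sum.cong[OF refl], rule sum.cong[OF refl], rule sum.swap)
  also have "\<dots> = (\<Sum>k\<in>UNIV. \<Sum>l\<in>UNIV. \<Sum>i\<in>UNIV. \<Sum>j\<in>UNIV. A $ k $ i * u $ i * M $ k $ l * cnj (A $ l $ j * u $ j))"
    by (rule sum_swap_pairs)
  also have "\<dots> = herm_form M (A *v u)"
    unfolding herm_form_def
    by (simp add: matrix_vector_mult_def sum_distrib_left sum_distrib_right ac_simps)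
  finally show ?thesis .
qed

lemma Re_herm_form_cmat:
  "Re (herm_form (cmat P) u) = Re_vec u \<bullet> (P *v Re_vec u) + Im_vec u \<bullet> (P *v Im_vec u)"
  unfolding herm_form_def
  by (simp add: Re_sum cmat_def Re_vec_def Im_vec_def inner_vec_def matrix_vector_mult_def
      sum_distrib_left sum.distrib[symmetric] algebra_simps)

section \<open>The period lattice\<close>

lemma intvecs_Im: "b \<in> intvecs \<Longrightarrow> Im (b $ i) = 0"
  unfolding intvecs_def complex_is_Int_iff by blast

lemma intvecs_Re_vec:
  assumes "b \<in> intvecs" shows "Re_vec b $ i \<in> \<int>"
proof -
  have "b $ i \<in> \<int>"
    using assms by (simp add: intvecs_def)
  then obtain n where "b $ i = of_int n"
    by (rule Ints_cases)
  then show ?thesis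
    by (simp add: Re_vec_def)
qed

lemma intvecs_eq_0_iff: "b \<in> intvecs \<Longrightarrow> b = 0 \<longleftrightarrow> Re_vec b = 0"
  by (auto simp: vec_eq_iff Re_vec_def intvecs_Im complex_eq_iff)

lemma axis_in_intvecs: "axis k 1 \<in> intvecs"
  by (simp add: intvecs_def axis_def)

lemma zero_in_intvecs: "0 \<in> intvecs"
  by (simp add: intvecs_def)

lemma Im_vec_Emat_intvecs: "a \<in> intvecs \<Longrightarrow> Im_vec (Emat e *v a) = 0"
  by (auto simp: Im_vec_def Emat_def matrix_vector_mult_def vec_eq_iff Im_sum intvecs_Im
      intro!: sum.neutral)

lemma Im_vec_mult_intvecs: "b \<in> intvecs \<Longrightarrow> Im_vec (M *v b) = ImM M *v Re_vec b"
  by (simp add: Im_vec_def ImM_def Re_vec_def matrix_vector_mult_def vec_eq_iff Im_sum intvecs_Im)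

lemma Lat_memI: "a \<in> intvecs \<Longrightarrow> b \<in> intvecs \<Longrightarrow> Emat e *v a + Om *v b \<in> Lat e Om"
  unfolding Lat_def by blast

lemma Emat_in_Lat: "a \<in> intvecs \<Longrightarrow> Emat e *v a \<in> Lat e Om"
  using Lat_memI[OF _ zero_in_intvecs] by simp

lemma mult_in_Lat: "b \<in> intvecs \<Longrightarrow> Om *v b \<in> Lat e Om"
  using Lat_memI[OF zero_in_intvecs] by simp

lemma Lat_decomposition:
  assumes "x \<in> Lat e Om"
  obtains a b where "a \<in> intvecs" "b \<in> intvecs" "x = Emat e *v a + Om *v b"
    "Im_vec x = ImM Om *v Re_vec b"
proof -
  obtain a b where ab: "a \<in> intvecs" "b \<in> intvecs" "x = Emat e *v a + Om *v b"
    using assms unfolding Lat_def by blast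
  then have "Im_vec x = ImM Om *v Re_vec b"
    by (simp add: Im_vec_add Im_vec_Emat_intvecs[OF ab(1)] Im_vec_mult_intvecs[OF ab(2)])
  with ab that show ?thesis by blast
qed

lemma Emat_mult_nth: "(Emat e *v x) $ i = of_nat (e i) * x $ i"
  unfolding Emat_def matrix_vector_mult_def
  by (simp add: if_distrib[of "\<lambda>a. a * _"] sum.delta cong: if_cong)

lemma mult_Emat_axis_nth: "(M *v (Emat e *v axis k 1)) $ i = M $ i $ k * of_nat (e k)"
proof -
  have "(Emat e *v axis k 1) $ j = (if j = k then of_nat (e k) else 0)" for j
    by (simp add: Emat_mult_nth axis_def)
  then show ?thesis
    by (simp add: matrix_vector_mult_def if_distrib[of "\<lambda>x. _ * x"] sum.delta cong: if_cong)
qed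

section \<open>Continuity and asymptotics\<close>

lemma connected_Ucov: "connected (Ucov R)"
  unfolding Ucov_def by (intro convex_connected convex_halfspace_Im_gt)

lemma imaginary_in_Ucov: "R < t \<Longrightarrow> \<i> * of_real t \<in> Ucov R"
  by (simp add: Ucov_def)

lemma continuous_on_det:
  fixes M :: "'a::topological_space \<Rightarrow> real^'n^'n"
  assumes "\<And>i j. continuous_on S (\<lambda>s. M s $ i $ j)"
  shows "continuous_on S (\<lambda>s. det (M s))"
  unfolding det_def by (intro continuous_intros assms)

lemma continuous_on_linear_system_solution:
  fixes M :: "'a::topological_space \<Rightarrow> real^'n^'n" and w x :: "'a \<Rightarrow> real^'n"
  assumes M: "\<And>i j. continuous_on S (\<lambda>s. M s $ i $ j)" and w: "\<And>i. continuous_on S (\<lambda>s. w s $ i)"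
    and det: "\<And>s. s \<in> S \<Longrightarrow> det (M s) \<noteq> 0"
    and sol: "\<And>s. s \<in> S \<Longrightarrow> M s *v x s = w s"
  shows "continuous_on S (\<lambda>s. x s $ k)"
proof -
  let ?N = "\<lambda>s. \<chi> i j. if j = k then w s $ i else M s $ i $ j"
  have "continuous_on S (\<lambda>s. det (?N s))"
  proof (rule continuous_on_det)
    fix i j
    show "continuous_on S (\<lambda>s. ?N s $ i $ j)"
      using M w by (cases "j = k") simp_all
  qed
  then have "continuous_on S (\<lambda>s. det (?N s) / det (M s))"
    by (rule continuous_on_divide[OF _ continuous_on_det[OF M]]) (use det in auto)
  moreover have "x s $ k = det (?N s) / det (M s)" if "s \<in> S" for s
    using cramer_lemma[where A = "M s" and x = "x s" and k = k, unfolded sol[OF that]] det[OF that]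
    by (simp add: field_simps)
  ultimately show ?thesis
    using continuous_on_cong by fastforce
qed

lemma continuous_on_Ints_constant:
  fixes f :: "'a::topological_space \<Rightarrow> real"
  assumes "connected S" and "continuous_on S f" and "\<And>x. x \<in> S \<Longrightarrow> f x \<in> \<int>"
    and "x \<in> S" and "y \<in> S"
  shows "f x = f y"
proof -
  have "f constant_on S"
  proof (rule continuous_discrete_range_constant[OF assms(1,2)])
    fix x assume "x \<in> S"
    then show "\<exists>e>0. \<forall>y. y \<in> S \<and> f y \<noteq> f x \<longrightarrow> e \<le> norm (f y - f x)"
      using assms(3) by (intro exI[of _ 1]) (auto intro: Ints_nonzero_abs_ge1)
  qed
  then show ?thesis
    using assms(4,5) unfolding constant_on_def by metis
qed

lemma eventually_uniform_bound_finite: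
  fixes g :: "'i::finite \<Rightarrow> 'a \<Rightarrow> real"
  assumes "\<And>p. \<exists>K. eventually (\<lambda>x. g p x \<le> K) F"
  shows "\<exists>K. eventually (\<lambda>x. \<forall>p. g p x \<le> K) F"
proof -
  obtain K where K: "\<And>p. eventually (\<lambda>x. g p x \<le> K p) F"
    using assms by metis
  have "K p \<le> Max (range K)" for p
    by (rule Max_ge) auto
  then have "eventually (\<lambda>x. \<forall>p. g p x \<le> Max (range K)) F"
    using K by (intro eventually_all_finite) (blast intro: eventually_mono order_trans)
  then show ?thesis by blast
qed

lemma congruence_fixed_limit:
  fixes X :: "'a \<Rightarrow> real^'n^'n"
  assumes "(X \<longlongrightarrow> B) F" and "F \<noteq> bot" and "eventually (\<lambda>x. P ** X x ** Q = X x) F"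
  shows "P ** B ** Q = B"
proof -
  have "((\<lambda>x. P ** X x ** Q) \<longlongrightarrow> P ** B ** Q) F"
    using assms(1) unfolding matrix_matrix_mult_def by (intro tendsto_intros)
  then have "(X \<longlongrightarrow> P ** B ** Q) F"
    using tendsto_cong[OF assms(3)] by blast
  then show ?thesis
    using tendsto_unique[OF assms(2) _ assms(1)] by blast
qed

lemma tendsto_matrix_at_top_linear_growth:
  fixes Y :: "real \<Rightarrow> real^'n^'n"
  assumes "\<And>t i j. T \<le> t \<Longrightarrow> \<bar>Y t $ i $ j - t * B $ i $ j\<bar> \<le> K"
  shows "((\<lambda>t. (1 / t) *\<^sub>R Y t) \<longlongrightarrow> B) at_top"
proof -
  have "((\<lambda>t. Y t $ i $ j / t) \<longlongrightarrow> B $ i $ j) at_top" for i j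
  proof -
    have "eventually (\<lambda>t. norm (Y t $ i $ j / t - B $ i $ j) \<le> K / t) at_top"
      using eventually_ge_at_top[of "max T 1"]
    proof eventually_elim
      case (elim t)
      then have "Y t $ i $ j / t - B $ i $ j = (Y t $ i $ j - t * B $ i $ j) / t"
        by (simp add: field_simps)
      then show ?case
        using assms[of t i j] elim by (simp add: abs_divide divide_right_mono)
    qed
    moreover have "((\<lambda>t. K / t) \<longlongrightarrow> 0) at_top"
      by (rule tendsto_divide_0[OF tendsto_const filterlim_at_top_imp_at_infinity[OF filterlim_ident]])
    ultimately have "((\<lambda>t. Y t $ i $ j / t - B $ i $ j) \<longlongrightarrow> 0) at_top"
      by (rule Lim_null_comparison)
    then show ?thesis
      by (simp add: LIM_zero_iff)
  qed
  then have "((\<lambda>t. \<chi> i j. Y t $ i $ j / t) \<longlongrightarrow> (\<chi> i j. B $ i $ j)) at_top"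
    by (intro tendsto_intros)
  moreover have "(\<lambda>t. \<chi> i j. Y t $ i $ j / t) = (\<lambda>t. (1 / t) *\<^sub>R Y t)"
    by (simp add: vec_eq_iff fun_eq_iff)
  ultimately show ?thesis
    by simp
qed

lemma mero_germ_log_norm_asymptotic:
  assumes "mero_germ f"
  obtains r K where "r > 0"
    and "\<And>w. w \<in> cball 0 r - {0} \<Longrightarrow> \<bar>ln (norm (f w)) - valt f * ln (norm w)\<bar> \<le> K"
proof -
  obtain r where "r > 0" "f holomorphic_on (ball 0 r - {0})" and "not_essential f 0"
    and "\<exists>\<^sub>F z in at 0. f z \<noteq> 0"
    using assms unfolding mero_germ_def by blast
  moreover have "isolated_singularity_at f 0"
    using calculation by (intro isolated_singularity_at_holomorphic[of f "ball 0 r"]) auto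
  ultimately obtain r1 where r1: "r1 > 0" "zor_poly f 0 holomorphic_on cball 0 r1"
    and factor: "\<And>w. w \<in> cball 0 r1 - {0} \<Longrightarrow>
        f w = zor_poly f 0 w * w powi valt f \<and> zor_poly f 0 w \<noteq> 0"
    and "zor_poly f 0 0 \<noteq> 0"
    using zorder_exist[of f 0] unfolding valt_def by (metis diff_zero)
  then have nonzero: "\<And>w. w \<in> cball 0 r1 \<Longrightarrow> zor_poly f 0 w \<noteq> 0"
    by (metis DiffI singletonD)
  define h where "h w = ln (norm (zor_poly f 0 w))" for w
  have "compact (h ` cball 0 r1)"
    unfolding h_def using r1(2) nonzero
    by (intro compact_continuous_image continuous_intros holomorphic_on_imp_continuous_on) auto
  then obtain K where K: "\<And>w. w \<in> cball 0 r1 \<Longrightarrow> \<bar>h w\<bar> \<le> K"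
    by (metis bounded_iff compact_imp_bounded image_eqI real_norm_def)
  have "\<bar>ln (norm (f w)) - valt f * ln (norm w)\<bar> \<le> K" if w: "w \<in> cball 0 r1 - {0}" for w
  proof -
    have "norm w > 0"
      using w by simp
    then have "norm w powi valt f = exp (ln (norm w)) powi valt f"
      by simp
    also have "\<dots> = exp (valt f * ln (norm w))"
      by (rule exp_power_int)
    finally have "norm w powi valt f = exp (valt f * ln (norm w))" .
    then have "norm (f w) = exp (h w + valt f * ln (norm w))"
      using factor[OF w] nonzero w by (simp add: h_def norm_mult norm_power_int exp_add)
    then show ?thesis
      using K w by simp
  qed
  with r1(1) that show ?thesis
    by blast
qed

lemma mero_germ_log_Im_asymptotic:
  fixes f y :: "complex \<Rightarrow> complex"
  assumes "mero_germ f"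
    and log_branch: "\<And>s. Im s > R \<Longrightarrow> exp (2 * pi * \<i> * y s) = f (exp (2 * pi * \<i> * s))"
  shows "\<exists>K. eventually (\<lambda>s. \<bar>Im (y s) - valt f * Im s\<bar> \<le> K) (filtercomap Im at_top)"
proof -
  obtain r K where r: "r > 0"
    and K: "\<And>w. w \<in> cball 0 r - {0} \<Longrightarrow> \<bar>ln (norm (f w)) - valt f * ln (norm w)\<bar> \<le> K"
    using mero_germ_log_norm_asymptotic[OF assms(1)] by blast
  have "\<bar>Im (y s) - valt f * Im s\<bar> \<le> K / (2 * pi)" if s: "max (R + 1) (- ln r / (2 * pi)) \<le> Im s" for s
  proof -
    define t where "t = exp (2 * pi * \<i> * s)"
    have ln_t: "ln (norm t) = - 2 * pi * Im s"
      by (simp add: t_def)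
    also have "\<dots> \<le> ln r"
      using s by (simp add: field_simps)
    finally have "norm t \<le> r"
      using r by (simp add: t_def ln_ge_iff)
    then have "t \<in> cball 0 r - {0}"
      by (simp add: t_def)
    moreover have "f t = exp (2 * pi * \<i> * y s)"
      using log_branch[of s] s by (simp add: t_def)
    then have "ln (norm (f t)) = - 2 * pi * Im (y s)"
      by simp
    ultimately have "\<bar>2 * pi * (valt f * Im s - Im (y s))\<bar> \<le> K"
      using K[of t] ln_t by (simp add: algebra_simps)
    then have "\<bar>Im (y s) - valt f * Im s\<bar> * (2 * pi) \<le> K"
      by (simp add: abs_mult abs_minus_commute mult.commute)
    then show ?thesis
      by (simp add: pos_le_divide_eq)
  qed
  then show ?thesis
    unfolding eventually_filtercomap_at_top_linorder by blast
qed

section \<open>The automorphism in a degenerating family\<close>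

locale degenerating_family_automorphism =
  fixes e :: "'n::finite \<Rightarrow> nat" and q :: "'n \<Rightarrow> 'n \<Rightarrow> complex \<Rightarrow> complex"
    and Om A :: "complex \<Rightarrow> complex^'n^'n" and R0 R :: real
  assumes e_pos: "\<And>i. e i > 0"
    and mero: "\<And>i j. mero_germ (q i j)"
    and B_posdef: "posdef (Bmat q)"
    and family: "family_data e q Om R0"
    and R0_le_R: "R0 \<le> R"
    and aut: "aut_c1 e Om R A"
begin

lemma e_nonzero [simp]: "e i \<noteq> 0"
  using e_pos[of i] by simp

abbreviation Y :: "complex \<Rightarrow> real^'n^'n" where
  "Y s \<equiv> ImM (Om s)"

abbreviation Ebasis :: "'n \<Rightarrow> complex^'n" where
  "Ebasis k \<equiv> Emat e *v axis k 1"

lemma Ucov_subset: "Ucov R \<subseteq> Ucov R0"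
  using R0_le_R by (auto simp: Ucov_def)

lemma Y_posdef: "s \<in> Ucov R \<Longrightarrow> posdef (Y s)"
  using family Ucov_subset unfolding family_data_def by blast

lemma Y_invertible: "s \<in> Ucov R \<Longrightarrow> invertible (Y s)"
  by (rule posdef_invertible[OF Y_posdef])

lemma continuous_on_Y: "continuous_on (Ucov R) (\<lambda>s. Y s $ i $ j)"
proof -
  have "(\<lambda>s. Om s $ i $ j) holomorphic_on Ucov R"
    using family Ucov_subset unfolding family_data_def by (blast intro: holomorphic_on_subset)
  then show ?thesis
    unfolding ImM_def by (simp add: continuous_on_Im holomorphic_on_imp_continuous_on)
qed

lemma continuous_on_A: "continuous_on (Ucov R) (\<lambda>s. A s $ i $ j)"
  using aut unfolding aut_c1_def by (blast intro: holomorphic_on_imp_continuous_on)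

lemma A_Lat: "s \<in> Ucov R \<Longrightarrow> (\<lambda>v. A s *v v) ` Lat e (Om s) = Lat e (Om s)"
  using aut unfolding aut_c1_def by blast

lemma A_preserves_herm_form:
  "s \<in> Ucov R \<Longrightarrow>
    herm_form (cmat (matrix_inv (Y s))) (A s *v u) = herm_form (cmat (matrix_inv (Y s))) u"
  using aut herm_form_congruence unfolding aut_c1_def by metis

lemma Y_asymptotic:
  obtains T K where "\<And>s i j. T \<le> Im s \<Longrightarrow> \<bar>Y s $ i $ j - Im s * Bmat q $ i $ j\<bar> \<le> K"
proof -
  let ?g = "\<lambda>(i, j) s. \<bar>Im (Om s $ i $ j) - valt (q i j) * Im s\<bar>"
  have "\<exists>K. eventually (\<lambda>s. ?g p s \<le> K) (filtercomap Im at_top)" for p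
  proof (cases p)
    case (Pair i j)
    have "\<And>s. Im s > R0 \<Longrightarrow> exp (2 * pi * \<i> * Om s $ i $ j) = q i j (exp (2 * pi * \<i> * s))"
      using family by (simp add: family_data_def Ucov_def)
    then have "\<exists>K. eventually (\<lambda>s. \<bar>Im (Om s $ i $ j) - valt (q i j) * Im s\<bar> \<le> K)
        (filtercomap Im at_top)"
      by (rule mero_germ_log_Im_asymptotic[OF mero])
    then show ?thesis
      using Pair by simp
  qed
  then obtain K where "eventually (\<lambda>s. \<forall>p. ?g p s \<le> K) (filtercomap Im at_top)"
    using eventually_uniform_bound_finite by blast
  then obtain T where "\<And>s i j. T \<le> Im s \<Longrightarrow> ?g (i, j) s \<le> K"
    unfolding eventually_filtercomap_at_top_linorder by blast
  then show ?thesis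
    using that[of T K] by (simp add: ImM_def Bmat_def mult.commute)
qed

lemma Y_coercive_at_top: "\<exists>T. \<forall>s z. T \<le> Im s \<longrightarrow> \<mu> * (norm z)\<^sup>2 \<le> z \<bullet> (Y s *v z)"
proof -
  obtain l where l: "l > 0" "\<And>x. l * (norm x)\<^sup>2 \<le> x \<bullet> (Bmat q *v x)"
    using posdef_coercive[OF B_posdef] by blast
  obtain T K where TK: "\<And>s i j. T \<le> Im s \<Longrightarrow> \<bar>Y s $ i $ j - Im s * Bmat q $ i $ j\<bar> \<le> K"
    using Y_asymptotic by blast
  define c where "c = (real CARD('n))\<^sup>2 * K"
  have "\<mu> * (norm z)\<^sup>2 \<le> z \<bullet> (Y s *v z)" if s: "max T (max 0 ((\<mu> + c) / l)) \<le> Im s" for s z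
  proof -
    define D where "D = Y s - Im s *\<^sub>R Bmat q"
    have "\<bar>z \<bullet> (D *v z)\<bar> \<le> c * (norm z)\<^sup>2"
      unfolding c_def using TK s by (intro abs_quadratic_form_le) (simp add: D_def)
    moreover have "z \<bullet> (Y s *v z) = Im s * (z \<bullet> (Bmat q *v z)) + z \<bullet> (D *v z)"
      by (simp add: D_def matrix_vector_mult_diff_rdistrib inner_diff_right
          scaleR_matrix_vector_assoc[symmetric])
    moreover have "Im s * (l * (norm z)\<^sup>2) \<le> Im s * (z \<bullet> (Bmat q *v z))"
      using l s by (intro mult_left_mono) auto
    moreover have "(\<mu> + c) * (norm z)\<^sup>2 \<le> (Im s * l) * (norm z)\<^sup>2"
      using s l(1) by (intro mult_right_mono) (simp_all add: field_simps)
    ultimately show ?thesis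
      by (simp add: algebra_simps)
  qed
  then show ?thesis
    by blast
qed

(* The coordinates b of A s (E e_k) = E a + Om s b, recovered from Im (E a + Om s b) = Y s b. *)
definition Omega_coord :: "'n \<Rightarrow> complex \<Rightarrow> real^'n" where
  "Omega_coord k s = matrix_inv (Y s) *v Im_vec (A s *v Ebasis k)"

lemma Omega_coord_solves: "s \<in> Ucov R \<Longrightarrow> Y s *v Omega_coord k s = Im_vec (A s *v Ebasis k)"
  using Y_invertible by (simp add: Omega_coord_def matrix_vector_mul_assoc matrix_inv_right)

lemma A_Ebasis_decomposition:
  assumes "s \<in> Ucov R"
  obtains a b where "a \<in> intvecs" "b \<in> intvecs" "A s *v Ebasis k = Emat e *v a + Om s *v b"
    "Re_vec b = Omega_coord k s"
proof -
  have "A s *v Ebasis k \<in> Lat e (Om s)"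
    using A_Lat[OF assms] Emat_in_Lat[OF axis_in_intvecs] by blast
  then obtain a b where ab: "a \<in> intvecs" "b \<in> intvecs" "A s *v Ebasis k = Emat e *v a + Om s *v b"
    and "Im_vec (A s *v Ebasis k) = Y s *v Re_vec b"
    by (rule Lat_decomposition)
  then have "Re_vec b = Omega_coord k s"
    using Y_invertible[OF assms] by (simp add: Omega_coord_def matrix_vector_mul_assoc matrix_inv_left)
  with ab that show ?thesis
    by blast
qed

lemma Omega_coord_Ints: "s \<in> Ucov R \<Longrightarrow> Omega_coord k s $ j \<in> \<int>"
  by (metis A_Ebasis_decomposition intvecs_Re_vec)

lemma Omega_coord_constant:
  assumes "s \<in> Ucov R" and "s' \<in> Ucov R"
  shows "Omega_coord k s = Omega_coord k s'"
proof -
  have "continuous_on (Ucov R) (\<lambda>s. Omega_coord k s $ j)" for j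
  proof (rule continuous_on_linear_system_solution[OF continuous_on_Y])
    show "continuous_on (Ucov R) (\<lambda>s. Im_vec (A s *v Ebasis k) $ i)" for i
      unfolding Im_vec_def matrix_vector_mult_def by (simp, intro continuous_intros continuous_on_A)
  qed (use Y_invertible invertible_det_nz Omega_coord_solves in auto)
  then have "Omega_coord k s $ j = Omega_coord k s' $ j" for j
    using assms Omega_coord_Ints by (intro continuous_on_Ints_constant[OF connected_Ucov]) auto
  then show ?thesis
    by (simp add: vec_eq_iff)
qed

(* For Im s large Y is mu-coercive, so the form Y^-1 preserved by A is at most |v|^2 / mu on the
   real vector v = E e_k, while the Omega-part b of A v contributes b . Y b >= mu |b|^2;
   with mu > |v| this forces |b| < 1. *)
lemma Omega_coord_eventually_zero: "\<exists>T. \<forall>s\<in>Ucov R. T \<le> Im s \<longrightarrow> Omega_coord k s = 0"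
proof -
  define v where "v = Re_vec (Ebasis k)"
  define \<mu> where "\<mu> = norm v + 1"
  have \<mu>: "\<mu> > 0" "norm v < \<mu>"
    by (simp_all add: \<mu>_def add_nonneg_pos)
  obtain T where T: "\<And>s z. T \<le> Im s \<Longrightarrow> \<mu> * (norm z)\<^sup>2 \<le> z \<bullet> (Y s *v z)"
    using Y_coercive_at_top by blast
  have "Omega_coord k s = 0" if s: "s \<in> Ucov R" "T \<le> Im s" for s
  proof -
    let ?Yi = "matrix_inv (Y s)" and ?w = "A s *v Ebasis k" and ?b = "Omega_coord k s"
    note bounds = inverse_quadratic_form_bounds[OF Y_invertible[OF s(1)] \<mu>(1) T[OF s(2)]]
    have "v \<bullet> (?Yi *v v) = Re (herm_form (cmat ?Yi) (Ebasis k))"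
      by (simp add: Re_herm_form_cmat v_def Im_vec_Emat_intvecs[OF axis_in_intvecs])
    also have "\<dots> = Re (herm_form (cmat ?Yi) ?w)"
      using A_preserves_herm_form[OF s(1)] by simp
    also have "\<dots> = Re_vec ?w \<bullet> (?Yi *v Re_vec ?w) + (Y s *v ?b) \<bullet> (?Yi *v (Y s *v ?b))"
      by (simp only: Re_herm_form_cmat Omega_coord_solves[OF s(1)])
    also have "(Y s *v ?b) \<bullet> (?Yi *v (Y s *v ?b)) = ?b \<bullet> (Y s *v ?b)"
      using matrix_inv_left[OF Y_invertible[OF s(1)]]
      by (simp add: matrix_vector_mul_assoc inner_commute)
    finally have "?b \<bullet> (Y s *v ?b) \<le> (norm v)\<^sup>2 / \<mu>"
      using bounds(1)[of "Re_vec ?w"] bounds(2)[of v] by linarith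
    then have "\<mu> * (norm ?b)\<^sup>2 \<le> (norm v)\<^sup>2 / \<mu>"
      using T[OF s(2)] order_trans by blast
    then have "(norm ?b)\<^sup>2 \<le> (norm v / \<mu>)\<^sup>2"
      using \<mu>(1) by (simp add: field_simps power2_eq_square)
    also have "\<dots> < 1"
      using \<mu> by (simp add: power_less_one_iff)
    finally have "norm ?b < 1"
      by (simp add: power_less_one_iff)
    then show ?thesis
      using Ints_vec_norm_less_one Omega_coord_Ints[OF s(1)] by blast
  qed
  then show ?thesis
    by blast
qed

lemma Omega_coord_zero:
  assumes "s \<in> Ucov R" shows "Omega_coord k s = 0"
proof -
  obtain T where T: "\<forall>s\<in>Ucov R. T \<le> Im s \<longrightarrow> Omega_coord k s = 0"
    using Omega_coord_eventually_zero by blast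
  have "\<i> * of_real (max T (R + 1)) \<in> Ucov R"
    by (rule imaginary_in_Ucov) simp
  with T show ?thesis
    using Omega_coord_constant[OF assms] by fastforce
qed

lemma A_Ebasis_in_E_lattice:
  assumes "s \<in> Ucov R"
  obtains a where "a \<in> intvecs" "A s *v Ebasis k = Emat e *v a"
proof -
  obtain a b where ab: "a \<in> intvecs" "b \<in> intvecs" "A s *v Ebasis k = Emat e *v a + Om s *v b"
    and "Re_vec b = 0"
    using A_Ebasis_decomposition[OF assms] Omega_coord_zero[OF assms] by metis
  then have "b = 0"
    using intvecs_eq_0_iff by blast
  with ab that show ?thesis
    by simp
qed

lemma A_entry_real_scaled_Ints:
  assumes "s \<in> Ucov R"
  shows "Im (A s $ i $ k) = 0" and "Re (A s $ i $ k) * e k / e i \<in> \<int>"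
proof -
  obtain a where a: "a \<in> intvecs" "A s *v Ebasis k = Emat e *v a"
    using A_Ebasis_in_E_lattice[OF assms] .
  then obtain n where n: "a $ i = of_int n"
    by (auto simp: intvecs_def elim: Ints_cases)
  have "A s $ i $ k * of_nat (e k) = of_nat (e i) * a $ i"
    using arg_cong[OF a(2), of "\<lambda>v. v $ i"] by (simp add: mult_Emat_axis_nth Emat_mult_nth)
  then have "A s $ i $ k = of_real (e i * n / e k)"
    using e_pos[of k] n by (simp add: field_simps)
  then show "Im (A s $ i $ k) = 0" and "Re (A s $ i $ k) * e k / e i \<in> \<int>"
    using e_pos[of i] e_pos[of k] by simp_all
qed

definition base_point :: complex where
  "base_point = \<i> * of_real (R + 1)"

lemma base_point_in_Ucov: "base_point \<in> Ucov R"
  unfolding base_point_def by (rule imaginary_in_Ucov) simp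

(* l(f); any base point would do, since A turns out to be constant. *)
definition l_aut :: "real^'n^'n" where
  "l_aut = (\<chi> i k. Re (A base_point $ i $ k))"

lemma A_eq_cmat_l_aut:
  assumes "s \<in> Ucov R" shows "A s = cmat l_aut"
proof -
  have "Re (A s $ i $ k) = Re (A base_point $ i $ k)" for i k
  proof -
    have "Re (A s $ i $ k) * e k / e i = Re (A base_point $ i $ k) * e k / e i"
      using A_entry_real_scaled_Ints(2)
      by (intro continuous_on_Ints_constant[OF connected_Ucov _ _ assms base_point_in_Ucov])
        (auto intro!: continuous_intros continuous_on_A)
    then show ?thesis
      using e_pos[of i] e_pos[of k] by simp
  qed
  then show ?thesis
    using A_entry_real_scaled_Ints(1)[OF assms] A_entry_real_scaled_Ints(1)[OF base_point_in_Ucov]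
    by (simp add: cmat_def l_aut_def vec_eq_iff complex_eq_iff)
qed

lemma l_aut_congruence:
  assumes "s \<in> Ucov R"
  shows "transpose l_aut ** matrix_inv (Y s) ** l_aut = matrix_inv (Y s)"
proof -
  have "transpose (A s) ** cmat (matrix_inv (Y s)) ** cnjM (A s) = cmat (matrix_inv (Y s))"
    using aut assms unfolding aut_c1_def by blast
  then show ?thesis
    by (simp add: A_eq_cmat_l_aut[OF assms] cmat_transpose cnjM_cmat cmat_mult cmat_inject)
qed

lemma l_aut_fixes_Y:
  assumes "s \<in> Ucov R"
  shows "l_aut ** Y s ** transpose l_aut = Y s"
  using congruence_matrix_inv[OF invertible_matrix_inv l_aut_congruence] Y_invertible assms
  by (simp add: matrix_inv_matrix_inv)

lemma det_l_aut: "det l_aut = 1 \<or> det l_aut = -1"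
proof -
  show ?thesis
    using det_congruence[OF invertible_matrix_inv l_aut_congruence] Y_invertible base_point_in_Ucov
    by blast
qed

(* Surjectivity of A on the lattice is used only here: writing Om e_j = A x with x = E a + Om b
   and comparing imaginary parts gives Y e_j = L Y b, hence L^T e_j = b by L^T Y^-1 L = Y^-1. *)
lemma l_aut_Ints: "l_aut $ j $ i \<in> \<int>"
proof -
  let ?s = base_point
  note s = base_point_in_Ucov
  have "Om ?s *v axis j 1 \<in> (\<lambda>v. A ?s *v v) ` Lat e (Om ?s)"
    using A_Lat[OF s] mult_in_Lat[OF axis_in_intvecs] by blast
  then obtain x where x: "x \<in> Lat e (Om ?s)" "A ?s *v x = Om ?s *v axis j 1"
    by (metis (no_types, lifting) imageE)
  obtain b where b: "b \<in> intvecs" "Im_vec x = Y ?s *v Re_vec b"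
    using Lat_decomposition[OF x(1)] by metis
  have "Y ?s *v axis j 1 = l_aut *v (Y ?s *v Re_vec b)"
    using arg_cong[OF x(2), of Im_vec]
    by (simp add: A_eq_cmat_l_aut[OF s] Im_vec_cmat b(2) Im_vec_mult_intvecs[OF axis_in_intvecs]
        Re_vec_axis)
  then have "transpose l_aut *v axis j 1
      = (transpose l_aut ** matrix_inv (Y ?s) ** l_aut) *v (Y ?s *v Re_vec b)"
    using matrix_inv_left[OF Y_invertible[OF s]]
    by (metis matrix_vector_mul_assoc matrix_vector_mul_lid)
  also have "\<dots> = Re_vec b"
    using matrix_inv_left[OF Y_invertible[OF s]]
    by (simp add: l_aut_congruence[OF s] matrix_vector_mul_assoc)
  finally have "l_aut $ j $ i = Re_vec b $ i"
    by (metis matrix_vector_mult_basis column_transpose row_def vec_lambda_beta)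
  then show ?thesis
    using intvecs_Re_vec[OF b(1)] by simp
qed

lemma l_aut_in_GLZ: "l_aut \<in> GLZ"
  unfolding GLZ_def using l_aut_Ints det_l_aut by blast

lemma l_aut_fixes_B: "l_aut ** Bmat q ** transpose l_aut = Bmat q"
proof (rule congruence_fixed_limit)
  let ?X = "\<lambda>t. (1 / t) *\<^sub>R Y (\<i> * of_real t)"
  obtain T K where TK: "\<And>s i j. T \<le> Im s \<Longrightarrow> \<bar>Y s $ i $ j - Im s * Bmat q $ i $ j\<bar> \<le> K"
    using Y_asymptotic by blast
  have "\<bar>Y (\<i> * of_real t) $ i $ j - t * Bmat q $ i $ j\<bar> \<le> K" if "T \<le> t" for t i j
    using TK[of "\<i> * of_real t" i j] that by simp
  then show "(?X \<longlongrightarrow> Bmat q) at_top"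
    by (rule tendsto_matrix_at_top_linear_growth)
  show "eventually (\<lambda>t. l_aut ** ?X t ** transpose l_aut = ?X t) at_top"
    using eventually_gt_at_top[of R]
    by eventually_elim
      (simp add: matrix_scalar_ac scalar_matrix_assoc[symmetric] l_aut_fixes_Y imaginary_in_Ucov)
qed simp

lemma l_aut_in_Orth: "l_aut \<in> Orth (matrix_inv (Bmat q))"
proof -
  have "invertible l_aut"
    using det_l_aut invertible_det_nz by force
  moreover have "transpose l_aut ** matrix_inv (Bmat q) ** l_aut = matrix_inv (Bmat q)"
    using congruence_matrix_inv[OF posdef_invertible[OF B_posdef], of "transpose l_aut"] l_aut_fixes_B
    by simp
  ultimately show ?thesis
    unfolding Orth_def by blast
qed

end

theorem lemma4p4:
  fixes e :: "'n::{finite,linorder} \<Rightarrow> nat"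
    and q :: "'n::{finite,linorder} \<Rightarrow> 'n::{finite,linorder} \<Rightarrow> complex \<Rightarrow> complex"
    and Om A :: "complex \<Rightarrow> complex^'n::{finite,linorder}^'n::{finite,linorder}"
    and R0 R :: real
  assumes "\<forall>i. e i > 0" and "\<forall>i j. i \<le> j \<longrightarrow> e i dvd e j"
    and "\<forall>i j. mero_germ (q i j)" and "\<forall>i j. q i j = q j i"
    and "posdef (Bmat q)"
    and "family_data e q Om R0"
    and "R \<ge> R0"
    and "aut_c1 e Om R A"
  shows "\<forall>s\<in>Ucov R. \<exists>L. restricts_to e (A s) L \<and> L \<in> GLZ \<and>
           L \<in> Orth (matrix_inv (Bmat q))"
proof -
  interpret degenerating_family_automorphism e q Om A R0 R
    using assms by unfold_locales auto
  show ?thesis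
    unfolding restricts_to_def using A_eq_cmat_l_aut l_aut_in_GLZ l_aut_in_Orth by auto
qed

end
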